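(* Let $\bar\eta>0$ be as in the setting below. For every $\eta_2\ge\bar\eta$, every $0\le\epsilon\le1/2$ and every $0<\bar\epsilon\le1$, the solution $\phi(\cdot;\eta_2,\epsilon,-\bar\epsilon)$ satisfies $\phi(\xi;\eta_2,\epsilon,-\bar\epsilon)<1$ for all $\xi\in[\bar\eta,\eta_2]$ belonging to its maximal existence interval.
   Context: Fix $d>2$. Define $f(\eta,v,w)=\frac{d+1}{\eta}w-\frac\eta2 w+\frac1d\eta v w+v^2-v$. For $(\eta_0,v_0,w_0)$ with $\eta_0>0$, $\phi(\xi;\eta_0,v_0,w_0)$ denotes the solution of $\phi''+f(\xi,\phi,\phi')=0$ with $\phi(\eta_0)=v_0$, $\phi'(\eta_0)=w_0$. $\bar\eta>0$ is a number such that for every $\eta_1\ge\bar\eta$, every solution $\phi$ of $\phi''+f(\xi,\phi,\phi')=0$ with $\phi(\eta_1)=1$, $\phi'(\eta_1)\le0$ satisfies $\phi'(\eta_2)<-1$ for all $\eta_2>\eta_1$ with $\phi(\eta_2)\in[0,1/2]$ (such $\bar\eta$ exists). *)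

theory Defs
  imports "HOL-Analysis.Analysis"
begin

definition fA :: "real \<Rightarrow> real \<Rightarrow> real \<Rightarrow> real \<Rightarrow> real" where
  "fA d \<eta> v w = (d + 1) / \<eta> * w - \<eta> / 2 * w + 1 / d * \<eta> * v * w + v^2 - v"

definition is_sol :: "real \<Rightarrow> real set \<Rightarrow> (real \<Rightarrow> real) \<Rightarrow> bool" where
  "is_sol d I \<phi> \<longleftrightarrow> is_interval I \<and> open I \<and> I \<subseteq> {0<..} \<and>
     (\<forall>x\<in>I. (\<phi> has_real_derivative deriv \<phi> x) (at x) \<and>
             (deriv \<phi> has_real_derivative - fA d x (\<phi> x) (deriv \<phi> x)) (at x))"

definition eta_bar_prop :: "real \<Rightarrow> real \<Rightarrow> bool" where
  "eta_bar_prop d \<eta>b \<longleftrightarrow> \<eta>b > 0 \<and>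
     (\<forall>\<eta>1 I \<phi>. \<eta>1 \<ge> \<eta>b \<and> is_sol d I \<phi> \<and> \<eta>1 \<in> I \<and> \<phi> \<eta>1 = 1 \<and> deriv \<phi> \<eta>1 \<le> 0 \<longrightarrow>
        (\<forall>\<eta>2\<in>I. \<eta>2 > \<eta>1 \<and> 0 \<le> \<phi> \<eta>2 \<and> \<phi> \<eta>2 \<le> 1/2 \<longrightarrow> deriv \<phi> \<eta>2 < -1))"

end

theory Submission
  imports Defs
begin

text \<open>If \<open>\<phi> \<xi> \<ge> 1\<close> for some \<open>\<xi> \<in> [\<eta>b, \<eta>2]\<close>, let \<open>\<eta>1\<close> be the last point of \<open>[\<xi>, \<eta>2]\<close>
  where \<open>\<phi> \<ge> 1\<close>. Since \<open>\<phi> \<eta>2 \<le> 1/2\<close>, the solution crosses the level 1 downwards there: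
  \<open>\<phi> \<eta>1 = 1\<close> and \<open>\<phi>' \<eta>1 \<le> 0\<close>. The defining property of \<open>\<eta>b\<close> then forces
  \<open>\<phi>' \<eta>2 < -1\<close>, contradicting \<open>\<phi>' \<eta>2 = -\<epsilon>b \<ge> -1\<close>.\<close>

lemma last_downcrossing:
  fixes f f' :: "real \<Rightarrow> real"
  assumes "a \<le> b" "c \<le> f a" "f b < c"
    and deriv: "\<And>x. x \<in> {a..b} \<Longrightarrow> (f has_real_derivative f' x) (at x)"
  obtains t where "a \<le> t" "t < b" "f t = c" "f' t \<le> 0"
proof -
  have cont: "continuous_on {a..b} f"
    using deriv by (meson DERIV_isCont continuous_at_imp_continuous_on)
  define S where "S = {a..b} \<inter> f -` {c..}"
  have "closed S"
    unfolding S_def by (rule continuous_closed_preimage[OF cont]) auto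
  then have "compact S"
    unfolding compact_eq_bounded_closed by (simp add: S_def bounded_Int)
  moreover have "S \<noteq> {}"
    using assms(1,2) unfolding S_def by auto
  ultimately obtain t where "t \<in> S" and last: "\<And>y. y \<in> S \<Longrightarrow> y \<le> t"
    using compact_attains_sup by metis
  then have t: "a \<le> t" "t \<le> b" "c \<le> f t"
    unfolding S_def by auto
  with \<open>f b < c\<close> have "t < b"
    by (cases "t = b") auto
  have "f t = c"
  proof (rule ccontr)
    assume "f t \<noteq> c"
    with t have "f t > c" by simp
    have "\<exists>x. t \<le> x \<and> x \<le> b \<and> f x = c"
    proof (rule IVT2')
      show "continuous_on {t..b} f"
        using t by (intro continuous_on_subset[OF cont]) auto
    qed (use \<open>f b < c\<close> \<open>f t > c\<close> \<open>t < b\<close> in auto)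
    then obtain x where "t < x" "x \<le> b" "f x = c"
      using \<open>f t > c\<close> by (metis order.not_eq_order_implies_strict order.strict_implies_not_eq)
    with t have "x \<in> S"
      unfolding S_def by simp
    with last \<open>t < x\<close> show False by fastforce
  qed
  moreover have "f' t \<le> 0"
  proof (rule ccontr)
    assume "\<not> f' t \<le> 0"
    moreover have "(f has_real_derivative f' t) (at t)"
      using deriv t by simp
    ultimately obtain e where "e > 0" and up: "\<And>h. 0 < h \<Longrightarrow> h < e \<Longrightarrow> f t < f (t + h)"
      using DERIV_pos_inc_right by (metis not_le)
    define h where "h = min (e/2) (b - t)"
    have "0 < h" "h < e" "t + h \<le> b"
      using \<open>e > 0\<close> \<open>t < b\<close> unfolding h_def by auto
    with up[of h] \<open>f t = c\<close> t have "t + h \<in> S"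
      unfolding S_def by simp
    with last \<open>0 < h\<close> show False by fastforce
  qed
  ultimately show thesis
    using that t \<open>t < b\<close> by blast
qed

lemma eta_bar_propD:
  assumes "eta_bar_prop d \<eta>b" "is_sol d I \<phi>"
    and "\<eta>1 \<in> I" "\<eta>b \<le> \<eta>1" "\<phi> \<eta>1 = 1" "deriv \<phi> \<eta>1 \<le> 0"
    and "\<eta>2 \<in> I" "\<eta>1 < \<eta>2" "0 \<le> \<phi> \<eta>2" "\<phi> \<eta>2 \<le> 1/2"
  shows "deriv \<phi> \<eta>2 < -1"
  using assms unfolding eta_bar_prop_def by blast

lemma is_sol_has_derivative:
  assumes "is_sol d I \<phi>" "x \<in> I"
  shows "(\<phi> has_real_derivative deriv \<phi> x) (at x)"
  using assms unfolding is_sol_def by blast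

lemma is_sol_interval_subset:
  assumes "is_sol d I \<phi>" "a \<in> I" "b \<in> I"
  shows "{a..b} \<subseteq> I"
proof -
  have "is_interval I"
    using assms(1) by (simp add: is_sol_def)
  with assms(2,3) show ?thesis
    by (meson atLeastAtMost_iff is_interval_1 subsetI)
qed

theorem corollaryA3:
  fixes d \<eta>b :: real
  assumes "d > 2"
    and "eta_bar_prop d \<eta>b"
  shows "\<forall>\<eta>2 \<epsilon> \<epsilon>b I \<phi>. \<eta>2 \<ge> \<eta>b \<and> 0 \<le> \<epsilon> \<and> \<epsilon> \<le> 1/2 \<and> 0 < \<epsilon>b \<and> \<epsilon>b \<le> 1 \<and>
      is_sol d I \<phi> \<and> \<eta>2 \<in> I \<and> \<phi> \<eta>2 = \<epsilon> \<and> deriv \<phi> \<eta>2 = - \<epsilon>b \<longrightarrow>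
      (\<forall>\<xi>\<in>I. \<eta>b \<le> \<xi> \<and> \<xi> \<le> \<eta>2 \<longrightarrow> \<phi> \<xi> < 1)"
proof (intro allI impI ballI)
  fix \<eta>2 \<epsilon> \<epsilon>b I \<phi> \<xi>
  assume "\<eta>2 \<ge> \<eta>b \<and> 0 \<le> \<epsilon> \<and> \<epsilon> \<le> 1/2 \<and> 0 < \<epsilon>b \<and> \<epsilon>b \<le> 1 \<and>
      is_sol d I \<phi> \<and> \<eta>2 \<in> I \<and> \<phi> \<eta>2 = \<epsilon> \<and> deriv \<phi> \<eta>2 = - \<epsilon>b"
  then have sol: "is_sol d I \<phi>" and "\<eta>2 \<in> I" "0 \<le> \<phi> \<eta>2" "\<phi> \<eta>2 \<le> 1/2" "deriv \<phi> \<eta>2 \<ge> -1"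
    by auto
  assume "\<xi> \<in> I" "\<eta>b \<le> \<xi> \<and> \<xi> \<le> \<eta>2"
  show "\<phi> \<xi> < 1"
  proof (rule ccontr)
    assume "\<not> \<phi> \<xi> < 1"
    have sub: "{\<xi>..\<eta>2} \<subseteq> I"
      using is_sol_interval_subset[OF sol \<open>\<xi> \<in> I\<close> \<open>\<eta>2 \<in> I\<close>] .
    obtain \<eta>1 where "\<xi> \<le> \<eta>1" "\<eta>1 < \<eta>2" "\<phi> \<eta>1 = 1" "deriv \<phi> \<eta>1 \<le> 0"
    proof (rule last_downcrossing[of \<xi> \<eta>2 1 \<phi> "deriv \<phi>"])
      show "\<And>x. x \<in> {\<xi>..\<eta>2} \<Longrightarrow> (\<phi> has_real_derivative deriv \<phi> x) (at x)"
        using sub by (intro is_sol_has_derivative[OF sol]) auto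
    qed (use \<open>\<eta>b \<le> \<xi> \<and> \<xi> \<le> \<eta>2\<close> \<open>\<not> \<phi> \<xi> < 1\<close> \<open>\<phi> \<eta>2 \<le> 1/2\<close> in auto)
    moreover have "\<eta>1 \<in> I" "\<eta>b \<le> \<eta>1"
      using sub \<open>\<eta>b \<le> \<xi> \<and> \<xi> \<le> \<eta>2\<close> \<open>\<xi> \<le> \<eta>1\<close> \<open>\<eta>1 < \<eta>2\<close> by auto
    ultimately have "deriv \<phi> \<eta>2 < -1"
      using \<open>\<eta>2 \<in> I\<close> \<open>0 \<le> \<phi> \<eta>2\<close> \<open>\<phi> \<eta>2 \<le> 1/2\<close> by (intro eta_bar_propD[OF assms(2) sol])
    with \<open>deriv \<phi> \<eta>2 \<ge> -1\<close> show False by simp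
  qed
qed

end
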